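(* Let $(M_k)_{k\in\mathbb{N}}$ be the sequence of matrices of a directive sequence and let $v\in\mathbb{R}_+^{d+1}$ have a totally irrational direction and satisfy $\bigcap_{n\in\mathbb{N}}M_{[0,n)}\mathbb{R}_+^{d+1}=\mathbb{R}_+v$. Then for every $k\in\mathbb{N}$ there exists $n\ge k$ such that $M_{[k,n)}>0$ (all entries positive).
   Context: $S$ is a finite set of unimodular substitutions on $A=\{0,\dots,d\}$; for a directive sequence $s=(s_k)\in S^{\mathbb{N}}$, $M_k=\mathrm{ab}(s_k)$ is the (non-negative integer, invertible) abelianization matrix of $s_k$, and $M_{[k,n)}=M_k\cdots M_{n-1}$. A vector $v\in\mathbb{R}_+^{d+1}$ has a totally irrational direction if its coordinates are linearly independent over $\mathbb{Q}$. *)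

theory Defs
  imports "HOL-Analysis.Analysis"
begin

text \<open>The alphabet A = {0,...,d} is modelled by a finite type 'a (with CARD('a) = d+1).
  A substitution is a map from letters to (non-empty) words.\<close>

type_synonym 'a subst = "'a \<Rightarrow> 'a list"

definition nonerasing :: "'a subst \<Rightarrow> bool" where
  "nonerasing \<sigma> \<longleftrightarrow> (\<forall>a. \<sigma> a \<noteq> [])"

definition ab :: "('a::finite) subst \<Rightarrow> real^'a^'a" where
  "ab \<sigma> = (\<chi> i j. real (count_list (\<sigma> j) i))"

definition unimodular_subst :: "('a::finite) subst \<Rightarrow> bool" where
  "unimodular_subst \<sigma> \<longleftrightarrow> nonerasing \<sigma> \<and> \<bar>det (ab \<sigma>)\<bar> = 1"

text \<open>M_{[k,n)} = M_k M_{k+1} ... M_{n-1} (identity if n \<le> k).\<close>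
fun mat_seg :: "(nat \<Rightarrow> real^'a^'a) \<Rightarrow> nat \<Rightarrow> nat \<Rightarrow> real^'a^'a" where
  "mat_seg M k 0 = mat 1"
| "mat_seg M k (Suc n) = (if Suc n \<le> k then mat 1 else mat_seg M k n ** M n)"

definition nonneg_orthant :: "(real^'a) set" where
  "nonneg_orthant = {x. \<forall>i. 0 \<le> x $ i}"

definition pos_matrix :: "real^'a^'a \<Rightarrow> bool" where
  "pos_matrix P \<longleftrightarrow> (\<forall>i j. 0 < P $ i $ j)"

definition totally_irrational :: "real^('a::finite) \<Rightarrow> bool" where
  "totally_irrational v \<longleftrightarrow>
     (\<forall>q :: 'a \<Rightarrow> rat. (\<Sum>i\<in>UNIV. of_rat (q i) * v $ i) = 0 \<longrightarrow> (\<forall>i. q i = 0))"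

end

theory Submission
  imports Defs
begin

(* If M_[k,n) is never positive for n >= k then, by pigeonhole, a fixed entry (i,j) of M_[k,n)
   vanishes for infinitely many n. The normalised j-th columns of these matrices lie on the face
   x_i = 0 of the nested closed cones M_[k,n) R_+^(d+1), so by compactness some unit vector c with
   c_i = 0 lies in all of them. Then M_[0,k) c lies in every cone M_[0,n) R_+^(d+1), hence is a
   multiple of v; so c is a nonzero multiple of M_[0,k)^(-1) v, and c_i = 0 is a nontrivial
   rational relation between the coordinates of v, given by the i-th row of that rational
   inverse. *)

lemma mat_seg_le: "n \<le> k \<Longrightarrow> mat_seg M k n = mat 1"
  by (cases n) auto

lemma mat_seg_split:
  "k \<le> m \<Longrightarrow> m \<le> n \<Longrightarrow> mat_seg M k n = mat_seg M k m ** mat_seg M m n"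
proof (induction n)
  case 0
  then show ?case by simp
next
  case (Suc n)
  show ?case
  proof (cases "m = Suc n")
    case True
    then show ?thesis by (simp add: mat_seg_le)
  next
    case False
    with Suc show ?thesis by (simp add: matrix_mul_assoc)
  qed
qed

lemma mat_seg_nonneg:
  assumes "\<And>n i j. 0 \<le> M n $ i $ j"
  shows "0 \<le> mat_seg M k n $ i $ j"
  using assms
  by (induction n arbitrary: i j) (auto simp: mat_def matrix_matrix_mult_def intro!: sum_nonneg)

lemma mat_seg_Rats:
  assumes "\<And>n i j. M n $ i $ j \<in> \<rat>"
  shows "mat_seg M k n $ i $ j \<in> \<rat>"
  using assms by (induction n arbitrary: i j) (auto simp: mat_def matrix_matrix_mult_def)

lemma invertible_mat_seg:
  assumes "\<And>n. invertible (M n)"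
  shows "invertible (mat_seg M k n)"
  using assms by (induction n) (auto simp: invertible_det_nz det_mul)

lemma invertible_ab: "unimodular_subst \<sigma> \<Longrightarrow> invertible (ab \<sigma>)"
  by (auto simp: unimodular_subst_def invertible_det_nz)

lemma Rats_right_inverse:
  fixes A B :: "real^'n^'n"
  assumes AB: "A ** B = mat 1" and rat: "\<And>i j. A $ i $ j \<in> \<rat>"
  shows "B $ i $ j \<in> \<rat>"
proof -
  have "det A * det B = 1"
    using AB by (metis det_I det_mul)
  then have det_A: "det A \<noteq> 0" by auto
  have "A *v (B *v axis j 1) = axis j 1"
    by (simp add: matrix_vector_mul_assoc AB)
  then have "B *v axis j 1 = (\<chi> k. det (\<chi> a b. if b = k then axis j 1 $ a else A $ a $ b) / det A)"
    using cramer[OF det_A] by blast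
  moreover have "B $ i $ j = (B *v axis j 1) $ i"
    by (simp add: matrix_vector_mult_basis column_def)
  ultimately have "B $ i $ j = det (\<chi> a b. if b = i then axis j 1 $ a else A $ a $ b) / det A"
    by simp
  moreover have "det (\<chi> a b. if b = i then axis j (1::real) $ a else A $ a $ b) \<in> \<rat>"
    unfolding det_def using rat by (intro Rats_sum Rats_mult Rats_prod) (auto simp: axis_def)
  moreover have "det A \<in> \<rat>"
    unfolding det_def using rat by (intro Rats_sum Rats_mult Rats_prod) auto
  ultimately show ?thesis by simp
qed

lemma totally_irrational_Rats_matrix_component_nonzero:
  fixes v :: "real^'n::finite"
  assumes irr: "totally_irrational v" and inv: "invertible N" and rat: "\<And>i j. N $ i $ j \<in> \<rat>"
  shows "(N *v v) $ i \<noteq> 0"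
proof
  assume zero: "(N *v v) $ i = 0"
  have "\<forall>l. \<exists>r. N $ i $ l = of_rat r"
    using rat by (auto simp: Rats_def)
  then obtain q where q: "\<And>l. N $ i $ l = of_rat (q l)"
    by metis
  have "(\<Sum>l\<in>UNIV. of_rat (q l) * v $ l) = 0"
    using zero by (simp add: matrix_vector_mult_def q[symmetric])
  then have "\<And>l. q l = 0"
    using irr by (simp add: totally_irrational_def)
  then have row_zero: "\<And>l. N $ i $ l = 0"
    by (simp add: q)
  obtain B where "N ** B = mat 1"
    using inv invertible_def by blast
  then have "(N ** B) $ i $ i = 1"
    by (simp add: mat_def)
  moreover have "(N ** B) $ i $ i = 0"
    by (simp add: matrix_matrix_mult_def row_zero)
  ultimately show False by simp
qed

lemma totally_irrational_Rats_preimage_component_nonzero: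
  fixes v c :: "real^'n::finite"
  assumes irr: "totally_irrational v" and inv: "invertible A" and rat: "\<And>i j. A $ i $ j \<in> \<rat>"
    and c: "A *v c = t *\<^sub>R v" "c \<noteq> 0"
  shows "c $ i \<noteq> 0"
proof -
  obtain B where AB: "A ** B = mat 1" and BA: "B ** A = mat 1"
    using inv invertible_def by blast
  have "c = B *v (A *v c)"
    by (simp add: matrix_vector_mul_assoc BA)
  then have c_eq: "c = t *\<^sub>R (B *v v)"
    by (simp add: c(1) matrix_vector_mult_scaleR)
  with c(2) have "t \<noteq> 0" by auto
  moreover have "(B *v v) $ i \<noteq> 0"
  proof (rule totally_irrational_Rats_matrix_component_nonzero[OF irr])
    show "invertible B"
      using AB BA invertible_def by blast
    show "\<And>i j. B $ i $ j \<in> \<rat>"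
      by (rule Rats_right_inverse[OF AB rat])
  qed
  ultimately show ?thesis
    by (simp add: c_eq)
qed

definition orthant_image :: "real^'n^'m \<Rightarrow> (real^'m) set" where
  "orthant_image P = (\<lambda>x. P *v x) ` nonneg_orthant"

lemma nonneg_matrix_vector_mult_orthant:
  "(\<And>i j. 0 \<le> A $ i $ j) \<Longrightarrow> x \<in> nonneg_orthant \<Longrightarrow> A *v x \<in> nonneg_orthant"
  by (auto simp: nonneg_orthant_def matrix_vector_mult_def intro!: sum_nonneg)

lemma orthant_image_mult: "orthant_image (A ** B) = (\<lambda>x. A *v x) ` orthant_image B"
  by (simp add: orthant_image_def image_image matrix_vector_mul_assoc)

lemma orthant_image_mult_subset:
  assumes "\<And>i j. 0 \<le> B $ i $ j"
  shows "orthant_image (A ** B) \<subseteq> orthant_image A"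
proof -
  have "orthant_image B \<subseteq> nonneg_orthant"
    using assms by (auto simp: orthant_image_def nonneg_matrix_vector_mult_orthant)
  then show ?thesis
    unfolding orthant_image_mult by (auto simp: orthant_image_def)
qed

lemma closed_nonneg_orthant: "closed nonneg_orthant"
  unfolding nonneg_orthant_def by (intro closed_Collect_all closed_halfspace_component_ge_cart)

lemma closed_orthant_image:
  fixes P :: "real^'n^'n"
  assumes "invertible P"
  shows "closed (orthant_image P)"
  unfolding orthant_image_def
proof (rule closed_injective_linear_image[OF closed_nonneg_orthant])
  show "linear (\<lambda>x. P *v x)"
    by (rule matrix_vector_mul_linear)
  show "inj (\<lambda>x. P *v x)"
    using assms invertible_def matrix_left_invertible_injective by blast
qed

lemma orthant_image_mat_seg_antimono:
  assumes nonneg: "\<And>n i j. 0 \<le> M n $ i $ j" and "m \<le> n"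
  shows "orthant_image (mat_seg M k n) \<subseteq> orthant_image (mat_seg M k m)"
proof (rule lift_Suc_antimono_le[OF _ \<open>m \<le> n\<close>])
  fix n
  show "orthant_image (mat_seg M k (Suc n)) \<subseteq> orthant_image (mat_seg M k n)"
    using orthant_image_mult_subset[OF nonneg, of "mat_seg M k n" n] by (simp add: mat_seg_le)
qed

lemma mat_seg_mem_Inter_orthant_image:
  assumes nonneg: "\<And>n i j. 0 \<le> M n $ i $ j" and c: "\<And>n. c \<in> orthant_image (mat_seg M k n)"
  shows "mat_seg M 0 k *v c \<in> (\<Inter>n. orthant_image (mat_seg M 0 n))"
proof (rule INT_I)
  fix n
  have "mat_seg M 0 k *v c \<in> orthant_image (mat_seg M 0 (max n k))"
    using c[of "max n k"] mat_seg_split[of 0 k "max n k" M] by (simp add: orthant_image_mult)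
  also have "\<dots> \<subseteq> orthant_image (mat_seg M 0 n)"
    by (rule orthant_image_mat_seg_antimono[OF nonneg]) simp
  finally show "mat_seg M 0 k *v c \<in> orthant_image (mat_seg M 0 n)" .
qed

lemma nonneg_not_pos_matrix_frequently_zero:
  fixes P :: "nat \<Rightarrow> real^'n^'n"
  assumes nonneg: "\<And>n i j. 0 \<le> P n $ i $ j"
    and not_pos: "\<forall>\<^sub>F n in sequentially. \<not> pos_matrix (P n)"
  obtains i j where "\<exists>\<^sub>F n in sequentially. P n $ i $ j = 0"
proof -
  have "\<exists>i j. \<exists>\<^sub>F n in sequentially. P n $ i $ j = 0"
  proof (rule ccontr)
    assume "\<nexists>i j. \<exists>\<^sub>F n in sequentially. P n $ i $ j = 0"
    then have "\<forall>\<^sub>F n in sequentially. P n $ i $ j \<noteq> 0" for i j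
      by (simp add: not_frequently)
    then have "\<forall>\<^sub>F n in sequentially. \<forall>i j. P n $ i $ j \<noteq> 0"
      by (intro eventually_all_finite)
    then have "\<forall>\<^sub>F n in sequentially. pos_matrix (P n)"
      by eventually_elim (simp add: pos_matrix_def nonneg order_less_le)
    with not_pos have "\<forall>\<^sub>F n in sequentially. False"
      by eventually_elim simp
    then show False by simp
  qed
  with that show thesis by blast
qed

lemma orthant_images_common_face_point:
  fixes P :: "nat \<Rightarrow> real^'n^'n"
  assumes inv: "\<And>n. invertible (P n)"
    and antimono: "\<And>m n. m \<le> n \<Longrightarrow> orthant_image (P n) \<subseteq> orthant_image (P m)"
    and zero: "\<exists>\<^sub>F n in sequentially. P n $ i $ j = 0"
  obtains c where "c \<noteq> 0" "c $ i = 0" "\<And>n. c \<in> orthant_image (P n)"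
proof -
  define F where "F m = orthant_image (P m) \<inter> {x. x $ i = 0} \<inter> sphere 0 1" for m
  have "compact (F m)" for m
    unfolding F_def using closed_orthant_image[OF inv]
    by (intro closed_Int_compact closed_Int closed_Collect_eq continuous_intros) auto
  moreover have "F m \<noteq> {}" for m
  proof -
    from zero obtain n where "m \<le> n" and entry: "P n $ i $ j = 0"
      unfolding frequently_sequentially by blast
    define y where "y = P n *v axis j 1"
    obtain B where "B ** P n = mat 1"
      using inv invertible_def by blast
    then have "B *v y = axis j 1"
      by (simp add: y_def matrix_vector_mul_assoc)
    then have "y \<noteq> 0" by auto
    have "(1 / norm y) *\<^sub>R axis j 1 \<in> nonneg_orthant"
      by (simp add: nonneg_orthant_def axis_def)
    then have "P n *v ((1 / norm y) *\<^sub>R axis j 1) \<in> orthant_image (P m)"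
      using antimono[OF \<open>m \<le> n\<close>] by (auto simp: orthant_image_def)
    moreover have "P n *v ((1 / norm y) *\<^sub>R axis j 1) = (1 / norm y) *\<^sub>R y"
      by (simp add: y_def matrix_vector_mult_scaleR)
    moreover have "y $ i = 0"
      by (simp add: y_def matrix_vector_mult_basis column_def entry)
    ultimately have "(1 / norm y) *\<^sub>R y \<in> F m"
      using \<open>y \<noteq> 0\<close> by (simp add: F_def)
    then show ?thesis by blast
  qed
  moreover have "F n \<subseteq> F m" if "m \<le> n" for m n
    using antimono[OF that] by (auto simp: F_def)
  ultimately obtain c where "c \<in> \<Inter>(range F)"
    using compact_nest[of F] by blast
  then have "norm c = 1" "c $ i = 0" "\<And>n. c \<in> orthant_image (P n)"
    by (auto simp: F_def)
  then show thesis
    by (intro that) auto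
qed

theorem lemma3p30:
  fixes S :: "('a::finite) subst set"
    and s :: "nat \<Rightarrow> 'a subst"
    and v :: "real^'a"
  assumes "finite S"
    and "\<forall>\<sigma>\<in>S. unimodular_subst \<sigma>"
    and "\<forall>k. s k \<in> S"
    and "v \<in> nonneg_orthant"
    and "totally_irrational v"
    and "(\<Inter>n. (\<lambda>x. mat_seg (\<lambda>k. ab (s k)) 0 n *v x) ` nonneg_orthant)
           = {c *\<^sub>R v | c. c \<ge> 0}"
  shows "\<forall>k. \<exists>n\<ge>k. pos_matrix (mat_seg (\<lambda>k. ab (s k)) k n)"
proof (intro allI, rule ccontr)
  fix k
  define M where "M = (\<lambda>k. ab (s k))"
  assume "\<not> (\<exists>n\<ge>k. pos_matrix (mat_seg (\<lambda>k. ab (s k)) k n))"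
  then have not_pos: "\<forall>\<^sub>F n in sequentially. \<not> pos_matrix (mat_seg M k n)"
    unfolding M_def eventually_sequentially by auto
  have nonneg: "\<And>n i j. 0 \<le> M n $ i $ j" and rat: "\<And>n i j. M n $ i $ j \<in> \<rat>"
    by (simp_all add: M_def ab_def)
  have inv: "\<And>n. invertible (M n)"
    using assms(2,3) by (simp add: M_def invertible_ab)
  obtain i j where zero: "\<exists>\<^sub>F n in sequentially. mat_seg M k n $ i $ j = 0"
    using nonneg_not_pos_matrix_frequently_zero[OF mat_seg_nonneg[OF nonneg] not_pos] .
  obtain c where c: "c \<noteq> 0" "c $ i = 0" "\<And>n. c \<in> orthant_image (mat_seg M k n)"
    using orthant_images_common_face_point[OF invertible_mat_seg[OF inv]
        orthant_image_mat_seg_antimono[OF nonneg] zero] by blast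
  have "mat_seg M 0 k *v c \<in> (\<Inter>n. orthant_image (mat_seg M 0 n))"
    using mat_seg_mem_Inter_orthant_image[OF nonneg c(3)] .
  also have "\<dots> = {c *\<^sub>R v | c. c \<ge> 0}"
    using assms(6) by (simp only: M_def orthant_image_def)
  finally obtain t where "mat_seg M 0 k *v c = t *\<^sub>R v"
    by blast
  moreover have "invertible (mat_seg M 0 k)"
    using inv by (rule invertible_mat_seg)
  moreover have "\<And>i j. mat_seg M 0 k $ i $ j \<in> \<rat>"
    using rat by (rule mat_seg_Rats)
  ultimately have "c $ i \<noteq> 0"
    using totally_irrational_Rats_preimage_component_nonzero[OF assms(5)] c(1) by blast
  with c(2) show False by simp
qed

end
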